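(* Let $\mathscr{G}_1,\mathscr{G}_2$ be covariance operators on $L^2([0,1]^D)$ of finite ranks $K_1,K_2$ with real analytic eigenfunctions, and assume without loss of generality $K_1\ge K_2$. Let $\mathscr{B}_1,\mathscr{B}_2$ be covariance operators on $L^2([0,1]^D)$ with continuous kernels that are banded with bandwidths $\underline{\delta}_1,\underline{\delta}_2$ whose components all lie in $(0,1/2)$. Let $\underline{M}=(M_1,\dots,M_D)$ and suppose $$K_1\le K^*=\prod_{d=1}^D\Big\lfloor\Big(\tfrac12-\max\{\delta_{1,d},\delta_{2,d}\}\Big)M_d-1\Big\rfloor .$$ Then for Lebesgue-almost every grid in $\mathcal{S}_{\underline{M}}$, $$\mathcal{G}^{\underline{M}}_1+\mathcal{B}^{\underline{M}}_1=\mathcal{G}^{\underline{M}}_2+\mathcal{B}^{\underline{M}}_2\iff \mathcal{G}^{\underline{M}}_1=\mathcal{G}^{\underline{M}}_2\ \text{ and }\ \mathcal{B}^{\underline{M}}_1=\mathcal{B}^{\underline{M}}_2 .$$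
   Context: A covariance operator with kernel $b$ is $\underline{\delta}$-banded, $\underline{\delta}=(\delta_1,\dots,\delta_D)$, if $b(\underline{s}_1,\underline{s}_2)=0$ whenever $|s_{1,d}-s_{2,d}|\ge\delta_d$ for some $d$. A function is real analytic on $[0,1]^D$ if it is the restriction of a real analytic function on an open set containing $[0,1]^D$. For $\underline{M}$, $\mathbb{N}_{\underline{M}}=\{1,\dots,M_1\}\times\cdots\times\{1,\dots,M_D\}$; $[0,1]^D$ is partitioned into cells $I_{\underline{m},\underline{M}}=\prod_d[(m_d-1)/M_d,m_d/M_d)$, and $\mathcal{S}_{\underline{M}}$ is the set of grids $\{\underline{s}_{\underline{m}}\}_{\underline{m}\in\mathbb{N}_{\underline{M}}}$ with $\underline{s}_{\underline{m}}\in I_{\underline{m},\underline{M}}$, identified with $\prod_{\underline{m}}I_{\underline{m},\underline{M}}$ and carrying Lebesgue measure. For an operator with kernel $g$ (resp. $b$), $\mathcal{G}^{\underline{M}}$ (resp. $\mathcal{B}^{\underline{M}}$) is the tensor in $\mathbb{R}^{M_1\times\cdots\times M_D\times M_1\times\cdots\times M_D}$ with entries $g(\underline{s}_{\underline{i}},\underline{s}_{\underline{j}})$ (resp. $b(\underline{s}_{\underline{i}},\underline{s}_{\underline{j}})$), $\underline{i},\underline{j}\in\mathbb{N}_{\underline{M}}$. *)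

theory Defs
  imports "HOL-Analysis.Analysis"
begin

text \<open>Points of [0,1]^D are vectors of type real^'d, the finite type 'd indexing the D coordinates.\<close>

definition unit_cube :: "(real^'d) set" where
  "unit_cube = {s. \<forall>d. 0 \<le> s$d \<and> s$d \<le> 1}"

text \<open>Real analyticity of f : real^'d \<Rightarrow> real on an open set U: locally around every point
  it is the (unconditionally, hence absolutely, convergent) sum of its multivariate power series.\<close>

definition real_analytic_on :: "(real^'d) set \<Rightarrow> (real^'d \<Rightarrow> real) \<Rightarrow> bool" where
  "real_analytic_on U f \<longleftrightarrow>
     (\<forall>x\<in>U. \<exists>r>0. \<exists>c :: ('d \<Rightarrow> nat) \<Rightarrow> real.
        \<forall>y\<in>ball x r. ((\<lambda>\<alpha>. c \<alpha> * (\<Prod>d\<in>UNIV. (y$d - x$d) ^ \<alpha> d)) has_sum f y) UNIV)"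

definition real_analytic_on_cube :: "(real^'d \<Rightarrow> real) \<Rightarrow> bool" where
  "real_analytic_on_cube f \<longleftrightarrow>
     (\<exists>U F. open U \<and> unit_cube \<subseteq> U \<and> real_analytic_on U F \<and> (\<forall>s\<in>unit_cube. F s = f s))"

text \<open>Kernel of a finite-rank-K covariance operator on L^2([0,1]^D) with real analytic
  eigenfunctions: g(s,t) = sum_k lam_k phi_k(s) phi_k(t), lam_k > 0, phi_k orthonormal.\<close>

definition finite_rank_analytic_cov :: "(real^'d \<Rightarrow> real^'d \<Rightarrow> real) \<Rightarrow> nat \<Rightarrow> bool" where
  "finite_rank_analytic_cov g K \<longleftrightarrow>
     (\<exists>(lam :: nat \<Rightarrow> real) (phi :: nat \<Rightarrow> real^'d \<Rightarrow> real).
        (\<forall>k<K. lam k > 0) \<and>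
        (\<forall>k<K. real_analytic_on_cube (phi k)) \<and>
        (\<forall>j<K. \<forall>k<K. (LINT s:unit_cube|lborel. phi j s * phi k s) = (if j = k then 1 else 0)) \<and>
        (\<forall>s\<in>unit_cube. \<forall>t\<in>unit_cube. g s t = (\<Sum>k<K. lam k * phi k s * phi k t)))"

definition cov_kernel :: "(real^'d \<Rightarrow> real^'d \<Rightarrow> real) \<Rightarrow> bool" where
  "cov_kernel b \<longleftrightarrow>
     (\<forall>s\<in>unit_cube. \<forall>t\<in>unit_cube. b s t = b t s) \<and>
     (\<forall>f :: real^'d \<Rightarrow> real. f \<in> borel_measurable lborel \<longrightarrow>
        set_integrable lborel unit_cube (\<lambda>s. (f s)\<^sup>2) \<longrightarrow>
        (LINT s:unit_cube|lborel. (LINT t:unit_cube|lborel. f s * b s t * f t)) \<ge> 0)"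

definition continuous_kernel :: "(real^'d \<Rightarrow> real^'d \<Rightarrow> real) \<Rightarrow> bool" where
  "continuous_kernel b \<longleftrightarrow> continuous_on (unit_cube \<times> unit_cube) (\<lambda>(s,t). b s t)"

definition banded :: "('d \<Rightarrow> real) \<Rightarrow> (real^'d \<Rightarrow> real^'d \<Rightarrow> real) \<Rightarrow> bool" where
  "banded \<delta> b \<longleftrightarrow>
     (\<forall>s\<in>unit_cube. \<forall>t\<in>unit_cube. (\<exists>d. \<bar>s$d - t$d\<bar> \<ge> \<delta> d) \<longrightarrow> b s t = 0)"

definition idx :: "('d::finite \<Rightarrow> nat) \<Rightarrow> ('d \<Rightarrow> nat) set" where
  "idx M = PiE UNIV (\<lambda>d. {1..M d})"

definition cell :: "('d \<Rightarrow> nat) \<Rightarrow> ('d \<Rightarrow> nat) \<Rightarrow> (real^'d) set" where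
  "cell M m = {s. \<forall>d. (real (m d) - 1) / real (M d) \<le> s$d \<and> s$d < real (m d) / real (M d)}"

definition grids :: "('d::finite \<Rightarrow> nat) \<Rightarrow> (('d \<Rightarrow> nat) \<Rightarrow> real^'d) set" where
  "grids M = {s. \<forall>m\<in>idx M. s m \<in> cell M m}"

definition grid_measure :: "('d::finite \<Rightarrow> nat) \<Rightarrow> (('d \<Rightarrow> nat) \<Rightarrow> real^'d) measure" where
  "grid_measure M = PiM (idx M) (\<lambda>_. lborel)"

definition kernel_tensor ::
  "('d::finite \<Rightarrow> nat) \<Rightarrow> (real^'d \<Rightarrow> real^'d \<Rightarrow> real) \<Rightarrow> (('d \<Rightarrow> nat) \<Rightarrow> real^'d)
     \<Rightarrow> ('d \<Rightarrow> nat) \<times> ('d \<Rightarrow> nat) \<Rightarrow> real" where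
  "kernel_tensor M k s = (\<lambda>(i,j). if i \<in> idx M \<and> j \<in> idx M then k (s i) (s j) else 0)"

text \<open>K* = prod_d floor((1/2 - max(delta_1d, delta_2d)) M_d - 1), negative factors read as 0.\<close>

definition Kstar :: "('d::finite \<Rightarrow> nat) \<Rightarrow> ('d \<Rightarrow> real) \<Rightarrow> ('d \<Rightarrow> real) \<Rightarrow> nat" where
  "Kstar M \<delta>1 \<delta>2 = (\<Prod>d\<in>UNIV. nat \<lfloor>(1/2 - max (\<delta>1 d) (\<delta>2 d)) * real (M d) - 1\<rfloor>)"

end

theory Submission
  imports Defs
begin

text \<open>Write h = g1 - g2. If h vanishes on the cube, the identity of the sums reduces to the one of the
  banded parts. Otherwise the finite ranks force K1 \<ge> 1, hence every M_d \<ge> 4, and the two corner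
  cells (1,...,1) and M of the grid are farther apart than every bandwidth, so both banded kernels
  vanish at the corresponding grid entry and it equals h(s_1, s_M) on both sides. Being a finite sum
  of products of analytic functions, h is analytic in each variable, and an analytic function on the
  cube that vanishes on a set of positive measure vanishes identically (the one-dimensional identity
  theorem along coordinate lines plus Fubini). The same Fubini argument over the grid coordinates
  shows that h(s_1, s_M) \<noteq> 0 for almost every grid, and then neither side of the equivalence holds.\<close>

definition locally_powser :: "real set \<Rightarrow> (real \<Rightarrow> real) \<Rightarrow> bool" where
  "locally_powser J f \<longleftrightarrow>
     (\<forall>x\<in>J. \<exists>r>0. \<exists>c::nat \<Rightarrow> real. \<forall>y. \<bar>y - x\<bar> < r \<longrightarrow> (\<lambda>n. c n * (y - x) ^ n) sums f y)"

lemma powser_coeffs_zero_if_islimpt_zeros: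
  fixes c :: "nat \<Rightarrow> real"
  assumes r: "r > 0"
    and S: "\<And>y. \<bar>y - p\<bar> < r \<Longrightarrow> (\<lambda>n. c n * (y - p) ^ n) sums f y"
    and zeros: "p islimpt {y. f y = 0}"
  shows "c m = 0"
proof (induction m rule: less_induct)
  case (less m)
  define g where "g w = (\<Sum>n. c (n + m) * w ^ n)" for w
  have "summable (\<lambda>n. c n * (r/2) ^ n)"
    using S[of "p + r/2"] r by (auto simp: sums_iff)
  then have "summable (\<lambda>n. c (n + m) * (r/2) ^ n)"
    by (subst summable_powser_ignore_initial_segment)
  then have g_cont: "isCont g 0"
    unfolding g_def by (rule isCont_powser) (use r in simp)
  \<comment> \<open>the lower coefficients vanish, so f factors as w^m g(w) around p\<close>
  have f_factor: "f (p + w) = w ^ m * g w" if "\<bar>w\<bar> < r" for w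
  proof -
    have f_sums: "(\<lambda>n. c n * w ^ n) sums f (p + w)" using S[of "p + w"] that by simp
    then have "(\<lambda>n. c (n + m) * w ^ (n + m)) sums f (p + w)"
      using sums_iff_shift[of "\<lambda>n. c n * w ^ n" m] less by simp
    then have "(\<lambda>n. w ^ m * (c (n + m) * w ^ n)) sums f (p + w)"
      by (simp add: power_add mult_ac)
    moreover have "summable (\<lambda>n. c (n + m) * w ^ n)"
      using f_sums by (metis summable_powser_ignore_initial_segment sums_summable)
    then have "(\<lambda>n. w ^ m * (c (n + m) * w ^ n)) sums (w ^ m * g w)"
      unfolding g_def by (intro sums_mult summable_sums)
    ultimately show ?thesis using sums_unique2 by blast
  qed
  show "c m = 0"
  proof (rule ccontr)
    assume "c m \<noteq> 0"
    moreover have "g 0 = c m"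
      unfolding g_def using powser_zero[of "\<lambda>n. c (n + m)"] by simp
    ultimately obtain e where e: "e > 0" "\<And>w. \<bar>w\<bar> < e \<Longrightarrow> g w \<noteq> 0"
      using continuous_at_avoid[of 0 g 0] g_cont by (auto simp: dist_real_def)
    have "open (ball p (min e r))" "p \<in> ball p (min e r)" using e r by auto
    then obtain y where y: "f y = 0" "y \<in> ball p (min e r)" "y \<noteq> p"
      using zeros unfolding islimpt_def by blast
    then have "\<bar>y - p\<bar> < e" "\<bar>y - p\<bar> < r"
      by (auto simp: dist_real_def)
    then have "g (y - p) = 0"
      using f_factor[of "y - p"] y by simp
    then show False using e \<open>\<bar>y - p\<bar> < e\<close> by blast
  qed
qed

lemma locally_powser_islimpt_zeros:
  assumes "locally_powser J f" "p \<in> J" "p islimpt {y. f y = 0}"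
  shows "\<exists>e>0. \<forall>y. \<bar>y - p\<bar> < e \<longrightarrow> f y = 0"
proof -
  obtain r c where r: "r > 0" and S: "\<And>y. \<bar>y - p\<bar> < r \<Longrightarrow> (\<lambda>n. c n * (y - p) ^ n) sums f y"
    using assms(1,2) unfolding locally_powser_def by blast
  have "c = (\<lambda>_. 0)"
    using powser_coeffs_zero_if_islimpt_zeros[OF r S assms(3)] by blast
  then have "f y = 0" if "\<bar>y - p\<bar> < r" for y
    using S[OF that] by (simp add: sums_iff)
  then show ?thesis using r by blast
qed

text \<open>The points near which f vanishes identically form a nonempty clopen subset of the interval.\<close>
lemma locally_powser_identity:
  assumes f: "locally_powser J f" and J: "{a..b} \<subseteq> J" and zeros: "infinite {t\<in>{a..b}. f t = 0}"
  shows "\<forall>t\<in>{a..b}. f t = 0"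
proof -
  define T where "T = {t\<in>{a..b}. \<exists>e>0. \<forall>y. \<bar>y - t\<bar> < e \<longrightarrow> f y = 0}"
  have limpt_T: "t \<in> T" if "t \<in> {a..b}" "t islimpt {y. f y = 0}" for t
    using locally_powser_islimpt_zeros[OF f] that J unfolding T_def by blast
  obtain p where "p \<in> {a..b}" "p islimpt {t\<in>{a..b}. f t = 0}"
    using zeros compact_eq_Bolzano_Weierstrass[of "{a..b}"] by auto
  then have "p \<in> T"
    using limpt_T islimpt_subset[of p _ "{y. f y = 0}"] by blast
  moreover have "openin (top_of_set {a..b}) T"
    unfolding openin_euclidean_subtopology_iff
  proof (intro conjI ballI)
    fix t assume "t \<in> T"
    then obtain e where e: "e > 0" "\<forall>y. \<bar>y - t\<bar> < e \<longrightarrow> f y = 0" unfolding T_def by auto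
    have "x' \<in> T" if "x' \<in> {a..b}" "dist x' t < e/2" for x'
    proof -
      have "f y = 0" if "\<bar>y - x'\<bar> < e/2" for y
      proof -
        have "\<bar>y - t\<bar> < e"
          using \<open>dist x' t < e/2\<close> that unfolding dist_real_def by arith
        then show ?thesis using e by blast
      qed
      then show ?thesis
        unfolding T_def using \<open>x' \<in> {a..b}\<close> e by (auto intro!: exI[of _ "e/2"])
    qed
    then show "\<exists>e>0. \<forall>x'\<in>{a..b}. dist x' t < e \<longrightarrow> x' \<in> T"
      using e by (intro exI[of _ "e/2"]) auto
  qed (auto simp: T_def)
  moreover have "closedin (top_of_set {a..b}) T"
    unfolding closedin_limpt
  proof (intro conjI allI impI)
    fix x assume x: "x islimpt T \<and> x \<in> {a..b}"
    have "T \<subseteq> {y. f y = 0}" unfolding T_def by force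
    then show "x \<in> T" using x limpt_T islimpt_subset by blast
  qed (auto simp: T_def)
  ultimately have "T = {a..b}"
    using connected_clopen[of "{a..b}"] by auto
  then show ?thesis unfolding T_def by force
qed

lemma real_analytic_on_subset:
  "real_analytic_on U f \<Longrightarrow> V \<subseteq> U \<Longrightarrow> real_analytic_on V f"
  unfolding real_analytic_on_def by blast

lemma real_analytic_on_add:
  assumes "real_analytic_on U f" "real_analytic_on U g"
  shows "real_analytic_on U (\<lambda>x. f x + g x)"
  unfolding real_analytic_on_def
proof
  fix x assume "x \<in> U"
  then obtain r1 c1 r2 c2 where "r1 > 0" "r2 > 0"
    and "\<forall>y\<in>ball x r1. ((\<lambda>\<alpha>. c1 \<alpha> * (\<Prod>d\<in>UNIV. (y$d - x$d) ^ \<alpha> d)) has_sum f y) UNIV"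
    and "\<forall>y\<in>ball x r2. ((\<lambda>\<alpha>. c2 \<alpha> * (\<Prod>d\<in>UNIV. (y$d - x$d) ^ \<alpha> d)) has_sum g y) UNIV"
    using assms unfolding real_analytic_on_def by meson
  then show "\<exists>r>0. \<exists>c. \<forall>y\<in>ball x r.
      ((\<lambda>\<alpha>. c \<alpha> * (\<Prod>d\<in>UNIV. (y$d - x$d) ^ \<alpha> d)) has_sum (f y + g y)) UNIV"
    by (intro exI[of _ "min r1 r2"] conjI exI[of _ "\<lambda>\<alpha>. c1 \<alpha> + c2 \<alpha>"] ballI)
       (auto simp: distrib_right intro!: has_sum_add)
qed

lemma real_analytic_on_cmult:
  assumes "real_analytic_on U f"
  shows "real_analytic_on U (\<lambda>x. a * f x)"
  unfolding real_analytic_on_def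
proof
  fix x assume "x \<in> U"
  then obtain r c where "r > 0"
    and "\<forall>y\<in>ball x r. ((\<lambda>\<alpha>. c \<alpha> * (\<Prod>d\<in>UNIV. (y$d - x$d) ^ \<alpha> d)) has_sum f y) UNIV"
    using assms unfolding real_analytic_on_def by meson
  then show "\<exists>r>0. \<exists>c. \<forall>y\<in>ball x r.
      ((\<lambda>\<alpha>. c \<alpha> * (\<Prod>d\<in>UNIV. (y$d - x$d) ^ \<alpha> d)) has_sum (a * f y)) UNIV"
    by (intro exI[of _ r] conjI exI[of _ "\<lambda>\<alpha>. a * c \<alpha>"] ballI)
       (auto simp: mult.assoc intro!: has_sum_cmult_right)
qed

lemma real_analytic_on_cube_cong:
  "real_analytic_on_cube f \<Longrightarrow> (\<And>s. s \<in> unit_cube \<Longrightarrow> f s = g s) \<Longrightarrow> real_analytic_on_cube g"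
  unfolding real_analytic_on_cube_def by metis

lemma real_analytic_on_cube_add:
  assumes "real_analytic_on_cube f" "real_analytic_on_cube g"
  shows "real_analytic_on_cube (\<lambda>x. f x + g x)"
proof -
  obtain U F V G where "open U" "unit_cube \<subseteq> U" "real_analytic_on U F" "\<forall>s\<in>unit_cube. F s = f s"
    and "open V" "unit_cube \<subseteq> V" "real_analytic_on V G" "\<forall>s\<in>unit_cube. G s = g s"
    using assms unfolding real_analytic_on_cube_def by meson
  then show ?thesis
    unfolding real_analytic_on_cube_def
    by (intro exI[of _ "U \<inter> V"] exI[of _ "\<lambda>x. F x + G x"])
       (auto intro: real_analytic_on_add real_analytic_on_subset)
qed

lemma real_analytic_on_cube_cmult:
  "real_analytic_on_cube f \<Longrightarrow> real_analytic_on_cube (\<lambda>x. a * f x)"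
  unfolding real_analytic_on_cube_def by (metis real_analytic_on_cmult)

lemma real_analytic_on_cube_zero: "real_analytic_on_cube (\<lambda>x. 0)"
  unfolding real_analytic_on_cube_def real_analytic_on_def
  by (intro exI[of _ UNIV] exI[of _ "\<lambda>x. 0"]) (auto intro!: exI[of _ 1] exI[of _ "\<lambda>_. 0"])

lemma real_analytic_on_cube_sum:
  "(\<And>k. k \<in> A \<Longrightarrow> real_analytic_on_cube (f k)) \<Longrightarrow> real_analytic_on_cube (\<lambda>x. \<Sum>k\<in>A. f k x)"
  by (induction A rule: infinite_finite_induct)
     (auto intro: real_analytic_on_cube_add real_analytic_on_cube_zero)

lemma real_analytic_on_cube_diff:
  assumes "real_analytic_on_cube f" "real_analytic_on_cube g"
  shows "real_analytic_on_cube (\<lambda>x. f x - g x)"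
  using real_analytic_on_cube_add[OF assms(1) real_analytic_on_cube_cmult[OF assms(2), of "-1"]]
  by simp

lemma real_analytic_on_imp_continuous_on:
  fixes F :: "real^'d \<Rightarrow> real"
  assumes "real_analytic_on U F"
  shows "continuous_on U F"
proof (rule continuous_at_imp_continuous_on, intro ballI)
  fix x assume "x \<in> U"
  then obtain r c where r: "r > 0" and hs: "\<And>y. y \<in> ball x r \<Longrightarrow>
      ((\<lambda>\<alpha>. c \<alpha> * (\<Prod>e\<in>UNIV. (y$e - x$e) ^ \<alpha> e)) has_sum F y) UNIV"
    using assms unfolding real_analytic_on_def by blast
  define \<rho> where "\<rho> = r / (2 * real CARD('d))"
  have \<rho>: "\<rho> > 0" unfolding \<rho>_def using r by simp
  define Y where "Y = {y::real^'d. \<forall>e. \<bar>y$e - x$e\<bar> \<le> \<rho>}"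
  have Y_ball: "Y \<subseteq> ball x r"
  proof
    fix y assume "y \<in> Y"
    then have "(\<Sum>e\<in>UNIV. \<bar>(y - x)$e\<bar>) \<le> (\<Sum>e\<in>(UNIV::'d set). \<rho>)"
      unfolding Y_def by (intro sum_mono) simp
    then have "norm (y - x) \<le> (\<Sum>e\<in>(UNIV::'d set). \<rho>)"
      using norm_le_l1_cart[of "y - x"] by linarith
    also have "\<dots> = r / 2" unfolding \<rho>_def by simp
    finally show "y \<in> ball x r" using r by (simp add: dist_norm norm_minus_commute)
  qed
  define z :: "real^'d" where "z = (\<chi> e. x$e + \<rho>)"
  have "z \<in> Y" unfolding Y_def z_def using \<rho> by simp
  define f where "f \<alpha> y = c \<alpha> * (\<Prod>e\<in>UNIV. (y$e - x$e) ^ \<alpha> e)" for \<alpha> y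
  \<comment> \<open>on the cube Y the series is dominated by its absolutely summable value at the corner z\<close>
  have "(\<lambda>\<alpha>. f \<alpha> z) summable_on UNIV"
    using hs[of z] \<open>z \<in> Y\<close> Y_ball unfolding f_def by (auto simp: has_sum_imp_summable)
  then have dominant: "(\<lambda>\<alpha>. norm (f \<alpha> z)) summable_on UNIV"
    using summable_on_iff_abs_summable_on_real[of "\<lambda>\<alpha>. f \<alpha> z" UNIV] by simp
  have dominated: "norm (f \<alpha> y) \<le> norm (f \<alpha> z)" if "y \<in> Y" for \<alpha> y
  proof -
    have "(\<Prod>e\<in>UNIV. \<bar>y$e - x$e\<bar> ^ \<alpha> e) \<le> (\<Prod>e\<in>UNIV. \<bar>z$e - x$e\<bar> ^ \<alpha> e)"
      using that \<rho> unfolding Y_def z_def by (intro prod_mono conjI power_mono) auto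
    then show ?thesis unfolding f_def
      by (simp add: abs_mult abs_prod power_abs mult_left_mono)
  qed
  have limit: "uniform_limit Y (\<lambda>X y. \<Sum>\<alpha>\<in>X. f \<alpha> y) F (finite_subsets_at_top UNIV)"
    by (rule Weierstrass_m_test_general'[OF _ _ dominant])
       (use dominated hs Y_ball in \<open>auto simp: f_def\<close>)
  have "\<forall>\<^sub>F X in finite_subsets_at_top UNIV. continuous_on Y (\<lambda>y. \<Sum>\<alpha>\<in>X. f \<alpha> y)"
    unfolding f_def by (intro always_eventually allI) (intro continuous_intros)
  then have "continuous_on Y F"
    using limit by (rule uniform_limit_theorem) (simp add: finite_subsets_at_top_neq_bot)
  moreover have "ball x \<rho> \<subseteq> Y"
    unfolding Y_def
  proof safe
    fix y e assume "y \<in> ball x \<rho>"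
    then have "norm (y - x) < \<rho>" by (simp add: dist_norm norm_minus_commute)
    then show "\<bar>y$e - x$e\<bar> \<le> \<rho>" using component_le_norm_cart[of "y - x" e] by simp
  qed
  then have "x \<in> interior Y"
    using \<rho> by (intro interiorI[of "ball x \<rho>"]) auto
  ultimately show "isCont F x" using continuous_on_interior by blast
qed

lemma real_analytic_on_cube_imp_continuous_on:
  "real_analytic_on_cube f \<Longrightarrow> continuous_on unit_cube f"
proof -
  assume "real_analytic_on_cube f"
  then obtain U F where "unit_cube \<subseteq> U" "real_analytic_on U F" "\<forall>s\<in>unit_cube. F s = f s"
    unfolding real_analytic_on_cube_def by blast
  then show ?thesis
    using continuous_on_eq continuous_on_subset real_analytic_on_imp_continuous_on by metis
qed

definition vec_upd :: "'a^'d \<Rightarrow> 'd \<Rightarrow> 'a \<Rightarrow> 'a^'d" where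
  "vec_upd x d t = (\<chi> e. if e = d then t else x$e)"

lemma vec_upd_nth [simp]: "vec_upd x d t $ e = (if e = d then t else x$e)"
  unfolding vec_upd_def by simp

lemma dist_vec_upd:
  fixes x :: "real^'d"
  shows "dist (vec_upd x d t) (vec_upd x d t0) = \<bar>t - t0\<bar>"
proof -
  have "vec_upd x d t - vec_upd x d t0 = (t - t0) *\<^sub>R axis d 1"
    by (simp add: vec_eq_iff axis_def)
  then show ?thesis by (simp add: dist_norm)
qed

lemma vec_upd_in_unit_cube: "x \<in> unit_cube \<Longrightarrow> t \<in> {0..1} \<Longrightarrow> vec_upd x d t \<in> unit_cube"
  unfolding unit_cube_def by auto

text \<open>Along a coordinate line only the multi-indices supported on that coordinate contribute.\<close>
lemma real_analytic_on_line:
  assumes "real_analytic_on U F"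
  shows "locally_powser {t. vec_upd x d t \<in> U} (\<lambda>t. F (vec_upd x d t))"
  unfolding locally_powser_def
proof
  fix t0 assume "t0 \<in> {t. vec_upd x d t \<in> U}"
  then obtain r c where r: "r > 0" and hs: "\<And>y. y \<in> ball (vec_upd x d t0) r \<Longrightarrow>
      ((\<lambda>\<alpha>. c \<alpha> * (\<Prod>e\<in>UNIV. (y$e - vec_upd x d t0 $ e) ^ \<alpha> e)) has_sum F y) UNIV"
    using assms unfolding real_analytic_on_def by blast
  define \<iota> where "\<iota> n = (\<lambda>e. if e = d then n else (0::nat))" for n
  have "inj \<iota>"
  proof (rule injI)
    fix a b assume "\<iota> a = \<iota> b"
    then have "\<iota> a d = \<iota> b d" by simp
    then show "a = b" by (simp add: \<iota>_def)
  qed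
  show "\<exists>r>0. \<exists>c. \<forall>t. \<bar>t - t0\<bar> < r \<longrightarrow> (\<lambda>n. c n * (t - t0) ^ n) sums F (vec_upd x d t)"
  proof (intro exI[of _ r] conjI exI[of _ "\<lambda>n. c (\<iota> n)"] allI impI r)
    fix t assume t: "\<bar>t - t0\<bar> < r"
    define g where "g \<alpha> = c \<alpha> * (\<Prod>e\<in>UNIV. (vec_upd x d t $ e - vec_upd x d t0 $ e) ^ \<alpha> e)" for \<alpha>
    have "vec_upd x d t \<in> ball (vec_upd x d t0) r"
      using t by (simp add: dist_vec_upd dist_commute)
    then have "(g has_sum F (vec_upd x d t)) UNIV"
      unfolding g_def by (rule hs)
    moreover have "g \<alpha> = 0" if "\<alpha> \<notin> range \<iota>" for \<alpha>
    proof -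
      have "\<exists>e. e \<noteq> d \<and> \<alpha> e \<noteq> 0"
      proof (rule ccontr)
        assume "\<not> ?thesis"
        then have "\<alpha> = \<iota> (\<alpha> d)" unfolding \<iota>_def by (force simp: fun_eq_iff)
        then show False using that by auto
      qed
      then obtain e where "e \<noteq> d" "\<alpha> e \<noteq> 0" by blast
      then have "(\<Prod>e\<in>UNIV. (vec_upd x d t $ e - vec_upd x d t0 $ e) ^ \<alpha> e) = 0"
        by (intro prod_zero bexI[of _ e]) auto
      then show ?thesis unfolding g_def by simp
    qed
    ultimately have "(g has_sum F (vec_upd x d t)) (range \<iota>)"
      by (subst has_sum_cong_neutral[of UNIV "range \<iota>" g g]) auto
    then have "((g \<circ> \<iota>) has_sum F (vec_upd x d t)) UNIV"
      using has_sum_reindex[OF inj_on_subset[OF \<open>inj \<iota>\<close> subset_UNIV]] by blast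
    moreover have "(g \<circ> \<iota>) n = c (\<iota> n) * (t - t0) ^ n" for n
    proof -
      have "(\<Prod>e\<in>UNIV. (vec_upd x d t $ e - vec_upd x d t0 $ e) ^ \<iota> n e)
          = (\<Prod>e\<in>UNIV. if e = d then (t - t0) ^ n else 1)"
        by (rule prod.cong) (auto simp: \<iota>_def)
      also have "\<dots> = (t - t0) ^ n" by (simp add: prod.delta)
      finally show ?thesis unfolding g_def by simp
    qed
    ultimately show "(\<lambda>n. c (\<iota> n) * (t - t0) ^ n) sums F (vec_upd x d t)"
      by (intro has_sum_imp_sums) (simp add: comp_def)
  qed
qed

lemma real_analytic_on_cube_line_zeros:
  assumes q: "real_analytic_on_cube q" and x: "x \<in> unit_cube"
    and zeros: "infinite {t\<in>{0..1}. q (vec_upd x d t) = 0}"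
  shows "\<forall>t\<in>{0..1}. q (vec_upd x d t) = 0"
proof -
  obtain U F where U: "unit_cube \<subseteq> U" and F: "real_analytic_on U F" "\<forall>s\<in>unit_cube. F s = q s"
    using q unfolding real_analytic_on_cube_def by blast
  have on_line: "F (vec_upd x d t) = q (vec_upd x d t)" if "t \<in> {0..1}" for t
    using F(2) vec_upd_in_unit_cube[OF x that] by blast
  have "{0..1} \<subseteq> {t. vec_upd x d t \<in> U}"
    using U vec_upd_in_unit_cube[OF x] by blast
  moreover have "{t\<in>{0..1}. F (vec_upd x d t) = 0} = {t\<in>{0..1}. q (vec_upd x d t) = 0}"
    using on_line by auto
  with zeros have "infinite {t\<in>{0..1}. F (vec_upd x d t) = 0}"
    by simp
  ultimately have "\<forall>t\<in>{0..1}. F (vec_upd x d t) = 0"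
    by (rule locally_powser_identity[OF real_analytic_on_line[OF F(1)]])
  then show ?thesis
    using on_line by simp
qed

lemma finite_rank_analytic_cov_sym:
  "finite_rank_analytic_cov g K \<Longrightarrow> s \<in> unit_cube \<Longrightarrow> t \<in> unit_cube \<Longrightarrow> g s t = g t s"
  unfolding finite_rank_analytic_cov_def by (auto simp: mult_ac)

lemma finite_rank_analytic_cov_analytic:
  assumes "finite_rank_analytic_cov g K" "t \<in> unit_cube"
  shows "real_analytic_on_cube (\<lambda>s. g s t)"
proof -
  obtain lam phi where "\<forall>k<K. real_analytic_on_cube (phi k)"
    and g: "\<forall>s\<in>unit_cube. \<forall>t\<in>unit_cube. g s t = (\<Sum>k<K. lam k * phi k s * phi k t)"
    using assms(1) unfolding finite_rank_analytic_cov_def by blast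
  then have "real_analytic_on_cube (\<lambda>s. \<Sum>k<K. lam k * phi k t * phi k s)"
    by (auto intro!: real_analytic_on_cube_sum real_analytic_on_cube_cmult)
  then show ?thesis
    by (rule real_analytic_on_cube_cong) (use g assms(2) in \<open>simp add: mult_ac\<close>)
qed

lemma finite_rank_analytic_cov_continuous:
  assumes "finite_rank_analytic_cov g K"
  shows "continuous_on (unit_cube \<times> unit_cube) (\<lambda>(s, t). g s t)"
proof -
  obtain lam phi where "\<forall>k<K. real_analytic_on_cube (phi k)"
    and g: "\<forall>s\<in>unit_cube. \<forall>t\<in>unit_cube. g s t = (\<Sum>k<K. lam k * phi k s * phi k t)"
    using assms unfolding finite_rank_analytic_cov_def by blast
  then have phi: "continuous_on unit_cube (phi k)" if "k < K" for k
    using that real_analytic_on_cube_imp_continuous_on by blast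
  have "continuous_on (unit_cube \<times> unit_cube) (\<lambda>p. phi k (fst p))"
    and "continuous_on (unit_cube \<times> unit_cube) (\<lambda>p. phi k (snd p))" if "k < K" for k
    by (auto intro!: continuous_on_compose2[OF phi[OF that]] continuous_intros)
  then have "continuous_on (unit_cube \<times> unit_cube)
      (\<lambda>p. \<Sum>k<K. lam k * phi k (fst p) * phi k (snd p))"
    by (intro continuous_intros) auto
  then show ?thesis
    by (rule continuous_on_eq) (use g in \<open>auto simp: mem_Times_iff\<close>)
qed

lemma (in product_sigma_finite) PiM_insert_positive_slices:
  assumes J: "finite J" "i \<notin> J"
    and Z: "Z \<in> sets (PiM (insert i J) M)" "emeasure (PiM (insert i J) M) Z \<noteq> 0"
  obtains T where "T \<in> sets (M i)" "emeasure (M i) T \<noteq> 0"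
    "\<And>t. t \<in> T \<Longrightarrow> emeasure (PiM J M) {y\<in>space (PiM J M). y(i:=t) \<in> Z} \<noteq> 0"
proof -
  interpret PJ: finite_product_sigma_finite M J by standard (use J in auto)
  define G where "G t = (\<integral>\<^sup>+ y. indicator Z (y(i:=t)) \<partial>PiM J M)" for t
  have upd_measurable: "(\<lambda>(t, y). y(i:=t)) \<in> measurable (M i \<Otimes>\<^sub>M PiM J M) (PiM (insert i J) M)"
  proof -
    have "(\<lambda>(t, y). y(i:=t)) = (\<lambda>(y, t). y(i := t)) \<circ> (\<lambda>(t, y). (y, t))" by auto
    moreover have "(\<lambda>(t, y). (y, t)) \<in> measurable (M i \<Otimes>\<^sub>M PiM J M) (PiM J M \<Otimes>\<^sub>M M i)"
      by measurable
    ultimately show ?thesis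
      using measurable_add_dim[of i J M] by (metis measurable_comp)
  qed
  have "(\<lambda>p. indicator Z ((snd p)(i := fst p)) :: ennreal) \<in> borel_measurable (M i \<Otimes>\<^sub>M PiM J M)"
    using measurable_comp[OF upd_measurable borel_measurable_indicator[OF Z(1)]]
    by (simp add: comp_def case_prod_beta)
  then have G_measurable: "G \<in> borel_measurable (M i)"
    unfolding G_def by (intro PJ.borel_measurable_nn_integral) (simp add: split_beta')
  have "emeasure (PiM (insert i J) M) Z = (\<integral>\<^sup>+ t. G t \<partial>M i)"
    unfolding G_def using Z(1) J by (simp add: product_nn_integral_insert_rev[symmetric])
  then have "\<not> (AE t in M i. G t = 0)"
    using Z(2) nn_integral_0_iff_AE[OF G_measurable] by simp
  moreover define T where "T = {t\<in>space (M i). G t \<noteq> 0}"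
  moreover have "T \<in> sets (M i)"
    unfolding T_def using G_measurable by measurable
  ultimately have "emeasure (M i) T \<noteq> 0"
    using AE_I[of _ "\<lambda>t. G t = 0" T] unfolding T_def by auto
  moreover have "G t = emeasure (PiM J M) {y\<in>space (PiM J M). y(i:=t) \<in> Z}" if "t \<in> space (M i)" for t
  proof -
    have "(\<lambda>y. y(i:=t)) \<in> measurable (PiM J M) (PiM (insert i J) M)"
      using measurable_compose_Pair1[OF that upd_measurable] by simp
    then have "{y\<in>space (PiM J M). y(i:=t) \<in> Z} \<in> sets (PiM J M)"
      using Z(1) by measurable
    then show ?thesis
      unfolding G_def by (simp add: nn_integral_indicator[symmetric] indicator_def cong: nn_integral_cong)
  qed
  ultimately show ?thesis
    using that[of T] \<open>T \<in> sets (M i)\<close> unfolding T_def by force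
qed

definition slicewise_rigid ::
  "'a measure \<Rightarrow> 'i set \<Rightarrow> ('i \<Rightarrow> 'a set) \<Rightarrow> (('i \<Rightarrow> 'a) \<Rightarrow> real) \<Rightarrow> bool" where
  "slicewise_rigid N I B F \<longleftrightarrow>
     (\<forall>i\<in>I. \<forall>x\<in>PiE I B. \<forall>T\<in>sets N. T \<subseteq> B i \<longrightarrow> emeasure N T \<noteq> 0 \<longrightarrow>
        (\<forall>t\<in>T. F (x(i:=t)) = 0) \<longrightarrow> (\<forall>t\<in>B i. F (x(i:=t)) = 0))"

lemma slicewise_rigid_fix_coordinate:
  assumes F: "slicewise_rigid N (insert i J) B F" and "i \<notin> J" "t \<in> B i"
  shows "slicewise_rigid N J B (\<lambda>y. F (y(i:=t)))"
  unfolding slicewise_rigid_def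
proof (intro ballI impI)
  fix j x T s
  assume j: "j \<in> J" and x: "x \<in> PiE J B" and T: "T \<in> sets N" "T \<subseteq> B j" "emeasure N T \<noteq> 0"
    and zero: "\<forall>s\<in>T. F ((x(j:=s))(i:=t)) = 0" and s: "s \<in> B j"
  have "i \<noteq> j" using j \<open>i \<notin> J\<close> by auto
  then have "\<forall>s\<in>T. F ((x(i:=t))(j:=s)) = 0"
    using zero by (simp add: fun_upd_twist)
  moreover have "x(i:=t) \<in> PiE (insert i J) B"
    using PiE_fun_upd[OF \<open>t \<in> B i\<close> x] .
  ultimately have "\<forall>s\<in>B j. F ((x(i:=t))(j:=s)) = 0"
    using F j T unfolding slicewise_rigid_def by blast
  then show "F ((x(j:=s))(i:=t)) = 0"
    using \<open>i \<noteq> j\<close> s by (simp add: fun_upd_twist)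
qed

text \<open>Induction on the coordinates: by Fubini, the values t of coordinate i whose slices meet the
  zero set in positive measure form a set of positive measure; by induction F vanishes on all these
  slices, and rigidity in coordinate i spreads this to every t \<in> B i.\<close>
lemma slicewise_rigid_vanishes:
  fixes N :: "'a measure" and B :: "'i \<Rightarrow> 'a set"
  assumes N: "sigma_finite_measure N" and I: "finite I" and B: "\<And>i. B i \<in> sets N"
  shows "F \<in> borel_measurable (PiM I (\<lambda>_. N)) \<Longrightarrow> slicewise_rigid N I B F \<Longrightarrow>
    emeasure (PiM I (\<lambda>_. N)) {x\<in>space (PiM I (\<lambda>_. N)). x \<in> PiE I B \<and> F x = 0} \<noteq> 0 \<Longrightarrow>
    \<forall>x\<in>PiE I B. F x = 0"
  using I
proof (induction I arbitrary: F rule: finite_induct)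
  case empty
  then have "{x\<in>space (PiM {} (\<lambda>_. N)). x \<in> PiE {} B \<and> F x = 0} \<noteq> {}"
    by (metis emeasure_empty)
  then show ?case by auto
next
  case (insert i J)
  interpret product_sigma_finite "\<lambda>_. N"
    using N by (simp add: product_sigma_finite_def)
  let ?P = "PiM J (\<lambda>_. N)" and ?Pi = "PiM (insert i J) (\<lambda>_. N)"
  define Z where "Z = {x\<in>space ?Pi. x \<in> PiE (insert i J) B \<and> F x = 0}"
  have F_measurable[measurable]: "F \<in> borel_measurable ?Pi" by fact
  have "PiE (insert i J) B \<in> sets ?Pi"
    using insert B by (intro sets_PiM_I_finite) auto
  then have "Z \<in> sets ?Pi"
    unfolding Z_def by measurable
  then obtain T where T: "T \<in> sets N" "emeasure N T \<noteq> 0"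
    and slices: "\<And>t. t \<in> T \<Longrightarrow> emeasure ?P {y\<in>space ?P. y(i:=t) \<in> Z} \<noteq> 0"
    using PiM_insert_positive_slices[of J i Z] insert.hyps insert.prems(3) unfolding Z_def by blast
  have T_sub: "t \<in> B i" "t \<in> space N" if t: "t \<in> T" for t
  proof -
    obtain y where "y(i:=t) \<in> Z"
      using slices[OF t] by (metis (no_types, lifting) Collect_empty_eq emeasure_empty)
    then show "t \<in> B i" "t \<in> space N"
      unfolding Z_def by (auto simp: PiE_iff space_PiM)
  qed
  have vanish: "\<forall>y\<in>PiE J B. F (y(i:=t)) = 0" if "t \<in> T" for t
  proof -
    note t = T_sub[OF that]
    have "(\<lambda>y. y(i:=t)) \<in> measurable ?P ?Pi"
      using t(2) by measurable
    then have "(\<lambda>y. F (y(i:=t))) \<in> borel_measurable ?P"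
      by measurable
    moreover note slicewise_rigid_fix_coordinate[OF insert.prems(2) insert.hyps(2) t(1)]
    moreover have "{y\<in>space ?P. y(i:=t) \<in> Z} = {y\<in>space ?P. y \<in> PiE J B \<and> F (y(i:=t)) = 0}"
      using t insert.hyps(2) unfolding Z_def
      by (auto simp: space_PiM PiE_iff extensional_def split: if_splits)
    with slices[OF that]
    have "emeasure ?P {y\<in>space ?P. y \<in> PiE J B \<and> F (y(i:=t)) = 0} \<noteq> 0"
      by simp
    ultimately show ?thesis
      by (rule insert.IH)
  qed
  have "T \<subseteq> B i"
    using T_sub by blast
  show ?case
  proof
    fix x assume x: "x \<in> PiE (insert i J) B"
    have "\<forall>t\<in>T. F (x(i:=t)) = 0"
      using vanish fun_upd_in_PiE[OF insert.hyps(2) x] by (metis fun_upd_upd)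
    then have "\<forall>t\<in>B i. F (x(i:=t)) = 0"
      using insert.prems(2) x T \<open>T \<subseteq> B i\<close> unfolding slicewise_rigid_def by blast
    moreover have "x i \<in> B i"
      using x by auto
    ultimately show "F x = 0"
      by (metis fun_upd_triv)
  qed
qed

lemma slicewise_rigid_cong:
  assumes F: "slicewise_rigid N I B F" and FG: "\<And>x. x \<in> PiE I B \<Longrightarrow> F x = G x"
  shows "slicewise_rigid N I B G"
  unfolding slicewise_rigid_def
proof (intro ballI impI)
  fix i x T t
  assume i: "i \<in> I" and x: "x \<in> PiE I B" and T: "T \<in> sets N" "T \<subseteq> B i" "emeasure N T \<noteq> 0"
    and zero: "\<forall>t\<in>T. G (x(i:=t)) = 0" and t: "t \<in> B i"
  have upd: "x(i:=s) \<in> PiE I B" if "s \<in> B i" for s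
    using PiE_fun_upd[OF that x] i by (simp add: insert_absorb)
  then have "\<forall>t\<in>T. F (x(i:=t)) = 0"
    using zero T(2) FG by auto
  then have "F (x(i:=t)) = 0"
    using F i x T t unfolding slicewise_rigid_def by blast
  then show "G (x(i:=t)) = 0"
    using FG[OF upd[OF t]] by simp
qed

definition vec_of_basis_coords :: "(real^'d \<Rightarrow> real) \<Rightarrow> real^'d" where
  "vec_of_basis_coords f = (\<Sum>b\<in>Basis. f b *\<^sub>R b)"

lemma vec_of_basis_coords_nth: "vec_of_basis_coords f $ e = f (axis e 1)"
proof -
  have "vec_of_basis_coords f $ e = vec_of_basis_coords f \<bullet> axis e 1"
    by (simp add: inner_axis)
  also have "\<dots> = f (axis e 1)"
    unfolding vec_of_basis_coords_def
    by (simp add: inner_sum_left inner_Basis if_distrib sum.delta cong: if_cong)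
  finally show ?thesis .
qed

lemma vec_of_basis_coords_measurable:
  "vec_of_basis_coords \<in> borel_measurable (PiM Basis (\<lambda>_. lborel))"
  unfolding vec_of_basis_coords_def by measurable

lemma emeasure_lborel_vec_of_basis_coords:
  "A \<in> sets borel \<Longrightarrow> emeasure lborel (A :: (real^'d) set)
    = emeasure (PiM Basis (\<lambda>_. lborel)) (vec_of_basis_coords -` A \<inter> space (PiM Basis (\<lambda>_. lborel)))"
  by (subst lborel_eq)
     (simp add: emeasure_distr vec_of_basis_coords_measurable vec_of_basis_coords_def[abs_def])

lemma vec_of_basis_coords_in_unit_cube:
  "vec_of_basis_coords f \<in> unit_cube \<longleftrightarrow> (\<forall>b\<in>Basis. f b \<in> {0..1})"
  unfolding unit_cube_def by (auto simp: vec_of_basis_coords_nth Basis_vec_def)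

lemma unit_cube_vec_of_basis_coords:
  assumes "x \<in> unit_cube"
  obtains f where "f \<in> PiE Basis (\<lambda>_. {0..1})" "vec_of_basis_coords f = x"
proof -
  define f where "f = restrict (\<lambda>b. x \<bullet> b) Basis"
  have "vec_of_basis_coords f = x"
    unfolding vec_of_basis_coords_def f_def by (simp add: euclidean_representation)
  moreover from this have "f \<in> PiE Basis (\<lambda>_. {0..1})"
    using assms vec_of_basis_coords_in_unit_cube[of f] unfolding f_def by auto
  ultimately show thesis
    using that by blast
qed

lemma vec_of_basis_coords_upd:
  "vec_of_basis_coords (f(axis d 1 := t)) = vec_upd (vec_of_basis_coords f) d t"
  unfolding vec_eq_iff by (simp add: vec_of_basis_coords_nth axis_eq_axis)

lemma real_analytic_on_cube_slicewise_rigid: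
  assumes q: "real_analytic_on_cube q"
  shows "slicewise_rigid lborel Basis (\<lambda>_. {0..1}) (\<lambda>f. q (vec_of_basis_coords f))"
  unfolding slicewise_rigid_def
proof (intro ballI impI)
  fix b f T and t :: real
  assume b: "b \<in> Basis" and f: "f \<in> PiE Basis (\<lambda>_. {0..1::real})"
    and T: "T \<in> sets lborel" "T \<subseteq> {0..1}" "emeasure lborel T \<noteq> 0"
    and zero: "\<forall>t\<in>T. q (vec_of_basis_coords (f(b:=t))) = 0" and t: "t \<in> {0..1}"
  obtain d where d: "b = axis d 1"
    using b by (auto simp: Basis_vec_def)
  define x where "x = vec_of_basis_coords f"
  have "x \<in> unit_cube"
    unfolding x_def vec_of_basis_coords_in_unit_cube using f by auto
  moreover have "T \<subseteq> {s\<in>{0..1}. q (vec_upd x d s) = 0}"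
    using T(2) zero unfolding x_def d vec_of_basis_coords_upd by auto
  then have "infinite {s\<in>{0..1}. q (vec_upd x d s) = 0}"
    using T(3) finite_imp_null_set_lborel infinite_super by blast
  ultimately show "q (vec_of_basis_coords (f(b:=t))) = 0"
    using real_analytic_on_cube_line_zeros[OF q] t unfolding x_def d vec_of_basis_coords_upd
    by blast
qed

lemma unit_cube_eq_cbox: "unit_cube = cbox (0::real^'d) 1"
  unfolding unit_cube_def by (auto simp: mem_box_cart)

lemma closed_unit_cube: "closed (unit_cube :: (real^'d) set)"
  unfolding unit_cube_eq_cbox by (rule closed_cbox)

text \<open>The coordinate lines of the cube reduce this to the one-dimensional identity theorem,
  via a Fubini argument in the product representation of Lebesgue measure.\<close>
lemma real_analytic_on_cube_vanishes:
  fixes q :: "real^'d \<Rightarrow> real"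
  assumes q: "real_analytic_on_cube q"
    and T: "T \<in> sets lborel" "T \<subseteq> unit_cube" "emeasure lborel T \<noteq> 0" "\<forall>x\<in>T. q x = 0"
  shows "\<forall>x\<in>unit_cube. q x = 0"
proof -
  let ?P = "PiM (Basis :: (real^'d) set) (\<lambda>_. lborel :: real measure)"
  define F where "F f = indicator unit_cube (vec_of_basis_coords f) *\<^sub>R q (vec_of_basis_coords f)" for f
  have F_eq: "F f = q (vec_of_basis_coords f)" if "f \<in> PiE Basis (\<lambda>_. {0..1})" for f
  proof -
    have "vec_of_basis_coords f \<in> unit_cube"
      using that by (simp add: vec_of_basis_coords_in_unit_cube PiE_iff)
    then show ?thesis unfolding F_def by simp
  qed
  have "(\<lambda>x. indicator unit_cube x *\<^sub>R q x) \<in> borel_measurable borel"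
    using borel_measurable_continuous_on_indicator[OF borel_closed[OF closed_unit_cube]]
      real_analytic_on_cube_imp_continuous_on[OF q] by blast
  then have F_measurable: "F \<in> borel_measurable ?P"
    unfolding F_def using vec_of_basis_coords_measurable by measurable
  have T_slices: "vec_of_basis_coords -` T \<inter> space ?P
      \<subseteq> {f\<in>space ?P. f \<in> PiE Basis (\<lambda>_. {0..1}) \<and> F f = 0}"
  proof
    fix f assume f: "f \<in> vec_of_basis_coords -` T \<inter> space ?P"
    then have "\<forall>b\<in>Basis. f b \<in> {0..1}"
      using T(2) vec_of_basis_coords_in_unit_cube by blast
    then have "f \<in> PiE Basis (\<lambda>_. {0..1})"
      using f by (simp add: space_PiM PiE_iff)
    then show "f \<in> {f\<in>space ?P. f \<in> PiE Basis (\<lambda>_. {0..1}) \<and> F f = 0}"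
      using F_eq f T(4) by simp
  qed
  have "PiE Basis (\<lambda>_. {0..1::real}) \<in> sets ?P"
    by (intro sets_PiM_I_finite) auto
  then have "{f\<in>space ?P. f \<in> PiE Basis (\<lambda>_. {0..1}) \<and> F f = 0} \<in> sets ?P"
    using F_measurable by measurable
  with T_slices have "emeasure ?P (vec_of_basis_coords -` T \<inter> space ?P)
      \<le> emeasure ?P {f\<in>space ?P. f \<in> PiE Basis (\<lambda>_. {0..1}) \<and> F f = 0}"
    by (rule emeasure_mono)
  moreover have "emeasure lborel T = emeasure ?P (vec_of_basis_coords -` T \<inter> space ?P)"
    using T(1) by (intro emeasure_lborel_vec_of_basis_coords) simp
  ultimately have "emeasure ?P {f\<in>space ?P. f \<in> PiE Basis (\<lambda>_. {0..1}) \<and> F f = 0} \<noteq> 0"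
    using T(3) by auto
  moreover have "slicewise_rigid lborel Basis (\<lambda>_. {0..1}) F"
    by (rule slicewise_rigid_cong[OF real_analytic_on_cube_slicewise_rigid[OF q]]) (simp add: F_eq)
  ultimately have F_zero: "\<forall>f\<in>PiE Basis (\<lambda>_. {0..1}). F f = 0"
    by (intro slicewise_rigid_vanishes[OF lborel.sigma_finite_measure_axioms _ _ F_measurable]) auto
  show ?thesis
  proof
    fix x :: "real^'d" assume "x \<in> unit_cube"
    then obtain f where "f \<in> PiE Basis (\<lambda>_. {0..1})" "vec_of_basis_coords f = x"
      by (rule unit_cube_vec_of_basis_coords)
    then show "q x = 0"
      using F_zero F_eq by force
  qed
qed

lemma idx_bounds: "m \<in> idx M \<Longrightarrow> 1 \<le> m d \<and> m d \<le> M d"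
  unfolding idx_def by (auto simp: PiE_iff)

lemma finite_idx: "finite (idx M)"
  unfolding idx_def by (intro finite_PiE) auto

lemma cell_subset_unit_cube:
  assumes "m \<in> idx M" shows "cell M m \<subseteq> unit_cube"
proof
  fix s assume s: "s \<in> cell M m"
  show "s \<in> unit_cube" unfolding unit_cube_def
  proof (intro CollectI allI conjI)
    fix d
    have "(real (m d) - 1) / real (M d) \<le> s$d" "s$d < real (m d) / real (M d)"
      using s unfolding cell_def by auto
    moreover have "0 \<le> (real (m d) - 1) / real (M d)" "real (m d) / real (M d) \<le> 1"
      using idx_bounds[OF assms, of d] by auto
    ultimately show "0 \<le> s$d" "s$d \<le> 1" by linarith+
  qed
qed

lemma lower_corner_in_cell:
  assumes "m \<in> idx M" shows "(\<chi> d. (real (m d) - 1) / real (M d)) \<in> cell M m"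
  unfolding cell_def
proof (intro CollectI allI conjI)
  fix d
  have "real (M d) > 0" using idx_bounds[OF assms, of d] by simp
  then show "(\<chi> d. (real (m d) - 1) / real (M d)) $ d < real (m d) / real (M d)"
    by (simp add: divide_strict_right_mono)
qed simp

lemma cell_borel: "cell M m \<in> sets (borel :: (real^'d) measure)"
proof -
  have "cell M m = {s::real^'d. \<forall>d. (real (m d) - 1) / real (M d) \<le> s$d} \<inter>
      (\<Inter>d. {s::real^'d. s$d < real (m d) / real (M d)})"
    unfolding cell_def by auto
  moreover have "closed {s::real^'d. \<forall>d. (real (m d) - 1) / real (M d) \<le> s$d}"
    by (intro closed_Collect_all closed_halfspace_component_ge_cart)
  moreover have "open (\<Inter>d. {s::real^'d. s$d < real (m d) / real (M d)})"
    by (intro open_INT) (auto intro: open_halfspace_component_lt_cart)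
  ultimately show ?thesis by (simp add: borel_closed borel_open sets.Int)
qed

lemma emeasure_cell_pos:
  assumes "m \<in> idx M" shows "emeasure lborel (cell M m :: (real^'d) set) \<noteq> 0"
proof -
  define a :: "real^'d" where "a = (\<chi> d. (real (m d) - 1) / real (M d))"
  define b :: "real^'d" where "b = (\<chi> d. real (m d) / real (M d))"
  have ab: "a$d < b$d" for d
    using idx_bounds[OF assms, of d] unfolding a_def b_def by (simp add: divide_strict_right_mono)
  have "emeasure lborel (box a b) = ennreal (\<Prod>c\<in>Basis. (b - a) \<bullet> c)"
    using ab by (intro emeasure_lborel_box) (auto simp: Basis_vec_def inner_axis less_imp_le)
  moreover have "(\<Prod>c\<in>Basis. (b - a) \<bullet> c) > 0"
    using ab by (intro prod_pos) (auto simp: Basis_vec_def inner_axis)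
  ultimately have "emeasure lborel (box a b) \<noteq> 0"
    by (simp only: ennreal_eq_0_iff not_le)
  moreover have "box a b \<subseteq> cell M m"
    unfolding cell_def by (auto simp: mem_box_cart a_def b_def less_imp_le)
  then have "emeasure lborel (box a b) \<le> emeasure lborel (cell M m)"
    by (rule emeasure_mono) (simp add: cell_borel)
  ultimately show ?thesis by auto
qed

lemma grid_point_in_unit_cube: "s \<in> grids M \<Longrightarrow> m \<in> idx M \<Longrightarrow> s m \<in> unit_cube"
  unfolding grids_def using cell_subset_unit_cube by blast

lemma real_analytic_on_cube_vanishes_on_cell:
  "real_analytic_on_cube q \<Longrightarrow> m \<in> idx M \<Longrightarrow> \<forall>x\<in>cell M m. q x = 0 \<Longrightarrow> \<forall>x\<in>unit_cube. q x = 0"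
  using real_analytic_on_cube_vanishes[of q "cell M m"]
    cell_borel[of M m] emeasure_cell_pos[of m M] cell_subset_unit_cube[of m M] by simp

definition separately_analytic :: "(real^'d \<Rightarrow> real^'d \<Rightarrow> real) \<Rightarrow> bool" where
  "separately_analytic h \<longleftrightarrow>
     (\<forall>y\<in>unit_cube. real_analytic_on_cube (\<lambda>x. h x y)) \<and>
     (\<forall>x\<in>unit_cube. real_analytic_on_cube (\<lambda>y. h x y))"

lemma separately_analytic_vanishes:
  fixes h :: "real^'d \<Rightarrow> real^'d \<Rightarrow> real" and M :: "'d \<Rightarrow> nat"
  assumes h: "separately_analytic h" and i: "i \<in> idx M" and j: "j \<in> idx M"
    and zero: "\<forall>x\<in>cell M i. \<forall>y\<in>cell M j. h x y = 0"
  shows "\<forall>x\<in>unit_cube. \<forall>y\<in>unit_cube. h x y = 0"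
proof (intro ballI)
  fix x y :: "real^'d" assume "x \<in> unit_cube" "y \<in> unit_cube"
  have "\<forall>x\<in>unit_cube. h x y' = 0" if "y' \<in> cell M j" for y'
    using h zero that cell_subset_unit_cube[OF j] unfolding separately_analytic_def
    by (intro real_analytic_on_cube_vanishes_on_cell[OF _ i]) auto
  then have "\<forall>y\<in>unit_cube. h x y = 0"
    using h \<open>x \<in> unit_cube\<close> unfolding separately_analytic_def
    by (intro real_analytic_on_cube_vanishes_on_cell[OF _ j]) auto
  then show "h x y = 0"
    using \<open>y \<in> unit_cube\<close> by blast
qed

lemma real_analytic_on_cube_rigid_on_cell:
  assumes q: "real_analytic_on_cube q" and m: "m \<in> idx M"
    and T: "T \<in> sets lborel" "T \<subseteq> cell M m" "emeasure lborel T \<noteq> 0" "\<forall>x\<in>T. q x = 0"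
  shows "\<forall>x\<in>cell M m. q x = 0"
  using real_analytic_on_cube_vanishes[OF q T(1) _ T(3,4)] T(2) cell_subset_unit_cube[OF m]
  by blast

text \<open>For i \<noteq> j the entry h(s_i, s_j) depends on each grid point through a single variable of h.\<close>
lemma separately_analytic_grid_entry_rigid:
  fixes h :: "real^'d \<Rightarrow> real^'d \<Rightarrow> real" and M :: "'d \<Rightarrow> nat"
  assumes h: "separately_analytic h" and ij: "i \<in> idx M" "j \<in> idx M" "i \<noteq> j"
  shows "slicewise_rigid lborel (idx M) (cell M) (\<lambda>s. h (s i) (s j))"
  unfolding slicewise_rigid_def
proof (intro ballI impI)
  fix m x T t
  assume m: "m \<in> idx M" and x: "x \<in> PiE (idx M) (cell M)"
    and T: "T \<in> sets lborel" "T \<subseteq> cell M m" "emeasure lborel T \<noteq> 0"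
    and zero: "\<forall>t\<in>T. h ((x(m:=t)) i) ((x(m:=t)) j) = 0" and t: "t \<in> cell M m"
  have x_cube: "x k \<in> unit_cube" if "k \<in> idx M" for k
    using x that cell_subset_unit_cube by (auto simp: PiE_iff)
  consider "m = i" | "m = j" | "m \<noteq> i" "m \<noteq> j" by blast
  then show "h ((x(m:=t)) i) ((x(m:=t)) j) = 0"
  proof cases
    case 1
    then have "\<forall>s\<in>cell M m. h s (x j) = 0"
      using h x_cube[OF ij(2)] ij(3) m T zero unfolding separately_analytic_def
      by (intro real_analytic_on_cube_rigid_on_cell) auto
    then show ?thesis using 1 ij(3) t by simp
  next
    case 2
    then have "\<forall>s\<in>cell M m. h (x i) s = 0"
      using h x_cube[OF ij(1)] ij(3) m T zero unfolding separately_analytic_def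
      by (intro real_analytic_on_cube_rigid_on_cell) auto
    then show ?thesis using 2 ij(3) t by simp
  next
    case 3
    obtain t0 where "t0 \<in> T"
      using T(3) by fastforce
    then show ?thesis using 3 zero by force
  qed
qed

lemma grid_entry_measurable:
  fixes h :: "real^'d \<Rightarrow> real^'d \<Rightarrow> real" and M :: "'d \<Rightarrow> nat"
  assumes cont: "continuous_on (unit_cube \<times> unit_cube) (\<lambda>(x, y). h x y)"
    and ij: "i \<in> idx M" "j \<in> idx M"
  shows "(\<lambda>s. indicator (unit_cube \<times> unit_cube) (s i, s j) *\<^sub>R h (s i) (s j))
    \<in> borel_measurable (grid_measure M)"
proof -
  have "unit_cube \<times> unit_cube \<in> sets (borel :: ((real^'d) \<times> (real^'d)) measure)"
    by (intro borel_closed closed_Times closed_unit_cube)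
  then have indicator_measurable:
    "(\<lambda>p. indicator (unit_cube \<times> unit_cube) p *\<^sub>R (\<lambda>(x, y). h x y) p) \<in> borel_measurable borel"
    using cont by (rule borel_measurable_continuous_on_indicator)
  have "(\<lambda>s. (s i, s j)) \<in> measurable (grid_measure M) (borel \<Otimes>\<^sub>M borel)"
    unfolding grid_measure_def
    using measurable_component_singleton[OF ij(1), of "\<lambda>_. lborel"]
      measurable_component_singleton[OF ij(2), of "\<lambda>_. lborel"]
    by (intro measurable_Pair) auto
  from measurable_comp[OF this[unfolded borel_prod] indicator_measurable] show ?thesis
    by (simp add: comp_def)
qed

lemma AE_grid_entry_nonzero:
  fixes h :: "real^'d \<Rightarrow> real^'d \<Rightarrow> real" and M :: "'d \<Rightarrow> nat"
  assumes cont: "continuous_on (unit_cube \<times> unit_cube) (\<lambda>(x, y). h x y)"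
    and h: "separately_analytic h" and nonzero: "x0 \<in> unit_cube" "y0 \<in> unit_cube" "h x0 y0 \<noteq> 0"
    and ij: "i \<in> idx M" "j \<in> idx M" "i \<noteq> j"
  shows "AE s in grid_measure M. s \<in> grids M \<longrightarrow> h (s i) (s j) \<noteq> 0"
proof -
  let ?P = "grid_measure M"
  define F where "F s = indicator (unit_cube \<times> unit_cube) (s i, s j) *\<^sub>R h (s i) (s j)" for s
  have F_eq: "F s = h (s i) (s j)" if "s \<in> PiE (idx M) (cell M)" for s
  proof -
    have "s i \<in> unit_cube" "s j \<in> unit_cube"
      using that ij cell_subset_unit_cube by (auto simp: PiE_iff)
    then show ?thesis unfolding F_def by simp
  qed
  define Z where "Z = {s\<in>space ?P. s \<in> PiE (idx M) (cell M) \<and> F s = 0}"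
  have F_measurable: "F \<in> borel_measurable ?P"
    unfolding F_def using grid_entry_measurable[OF cont ij(1,2)] .
  have "PiE (idx M) (cell M) \<in> sets ?P"
    unfolding grid_measure_def using finite_idx by (intro sets_PiM_I_finite) (auto simp: cell_borel)
  then have "Z \<in> sets ?P"
    unfolding Z_def using F_measurable by measurable
  moreover have "emeasure ?P Z = 0"
  proof (rule ccontr)
    assume "emeasure ?P Z \<noteq> 0"
    moreover have "slicewise_rigid lborel (idx M) (cell M) F"
      by (rule slicewise_rigid_cong[OF separately_analytic_grid_entry_rigid[OF h ij]])
         (simp add: F_eq)
    ultimately have F_zero: "\<forall>s\<in>PiE (idx M) (cell M). F s = 0"
      using F_measurable unfolding Z_def grid_measure_def
      by (intro slicewise_rigid_vanishes[OF lborel.sigma_finite_measure_axioms finite_idx])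
         (auto simp: cell_borel)
    have "h x y = 0" if "x \<in> cell M i" "y \<in> cell M j" for x y
    proof -
      define s where "s = (\<lambda>m\<in>idx M. if m = i then x else if m = j then y
        else (\<chi> d. (real (m d) - 1) / real (M d)))"
      have "s \<in> PiE (idx M) (cell M)"
        unfolding s_def using that lower_corner_in_cell by (auto simp: PiE_iff)
      moreover have "s i = x" "s j = y"
        unfolding s_def using ij by auto
      ultimately show ?thesis
        using F_zero F_eq by force
    qed
    then show False
      using separately_analytic_vanishes[OF h ij(1,2)] nonzero by blast
  qed
  moreover have "{s\<in>space ?P. \<not> (s \<in> grids M \<longrightarrow> h (s i) (s j) \<noteq> 0)} \<subseteq> Z"
    using F_eq unfolding Z_def grids_def grid_measure_def by (auto simp: space_PiM PiE_iff)
  ultimately show ?thesis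
    by (intro AE_I'[of Z]) auto
qed

lemma separately_analytic_finite_rank_diff:
  assumes "finite_rank_analytic_cov g1 K1" "finite_rank_analytic_cov g2 K2"
  shows "separately_analytic (\<lambda>x y. g1 x y - g2 x y)"
proof -
  have second: "real_analytic_on_cube (\<lambda>y. g x y)"
    if "finite_rank_analytic_cov g K" "x \<in> unit_cube" for g :: "real^'a \<Rightarrow> real^'a \<Rightarrow> real" and K x
    by (rule real_analytic_on_cube_cong[OF finite_rank_analytic_cov_analytic[OF that]])
       (use finite_rank_analytic_cov_sym[OF that(1)] that(2) in auto)
  show ?thesis
    unfolding separately_analytic_def
    using real_analytic_on_cube_diff[OF finite_rank_analytic_cov_analytic[OF assms(1)]
          finite_rank_analytic_cov_analytic[OF assms(2)]]
      real_analytic_on_cube_diff[OF second[OF assms(1)] second[OF assms(2)]]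
    by blast
qed

lemma kernel_tensor_entry:
  "i \<in> idx M \<Longrightarrow> j \<in> idx M \<Longrightarrow> kernel_tensor M k s (i, j) = k (s i) (s j)"
  unfolding kernel_tensor_def by simp

lemma kernel_tensor_cong:
  assumes "s \<in> grids M" "\<forall>x\<in>unit_cube. \<forall>y\<in>unit_cube. g1 x y = g2 x y"
  shows "kernel_tensor M g1 s = kernel_tensor M g2 s"
  using assms grid_point_in_unit_cube unfolding kernel_tensor_def by (fastforce simp: fun_eq_iff)

lemma kernel_tensor_sum_eq_iff_of_eq:
  assumes "s \<in> grids M" "\<forall>x\<in>unit_cube. \<forall>y\<in>unit_cube. g1 x y = g2 x y"
  shows "(\<lambda>x. kernel_tensor M g1 s x + kernel_tensor M b1 s x)
      = (\<lambda>x. kernel_tensor M g2 s x + kernel_tensor M b2 s x)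
    \<longleftrightarrow> kernel_tensor M g1 s = kernel_tensor M g2 s \<and> kernel_tensor M b1 s = kernel_tensor M b2 s"
  using kernel_tensor_cong[OF assms] by (simp add: fun_eq_iff)

lemma kernel_tensor_sum_eq_iff_of_entry:
  assumes "i \<in> idx M" "j \<in> idx M" "b1 (s i) (s j) = 0" "b2 (s i) (s j) = 0"
    and "g1 (s i) (s j) \<noteq> g2 (s i) (s j)"
  shows "(\<lambda>x. kernel_tensor M g1 s x + kernel_tensor M b1 s x)
      = (\<lambda>x. kernel_tensor M g2 s x + kernel_tensor M b2 s x)
    \<longleftrightarrow> kernel_tensor M g1 s = kernel_tensor M g2 s \<and> kernel_tensor M b1 s = kernel_tensor M b2 s"
proof -
  have "kernel_tensor M g1 s (i, j) + kernel_tensor M b1 s (i, j)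
      \<noteq> kernel_tensor M g2 s (i, j) + kernel_tensor M b2 s (i, j)"
    "kernel_tensor M g1 s (i, j) \<noteq> kernel_tensor M g2 s (i, j)"
    using assms by (simp_all add: kernel_tensor_entry)
  then show ?thesis by metis
qed

lemma four_le_if_Kstar_nonzero:
  assumes "\<forall>d. 0 \<le> \<delta>1 d" "Kstar M \<delta>1 \<delta>2 \<noteq> 0"
  shows "4 \<le> real (M d)"
proof -
  have "nat \<lfloor>(1/2 - max (\<delta>1 d) (\<delta>2 d)) * real (M d) - 1\<rfloor> \<noteq> 0"
    using assms(2) unfolding Kstar_def by simp
  then have "1 \<le> (1/2 - max (\<delta>1 d) (\<delta>2 d)) * real (M d) - 1"
    by linarith
  moreover have "0 \<le> max (\<delta>1 d) (\<delta>2 d)"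
    using assms(1) by (simp add: le_max_iff_disj)
  then have "(1/2 - max (\<delta>1 d) (\<delta>2 d)) * real (M d) \<le> (1/2) * real (M d)"
    by (intro mult_right_mono) auto
  ultimately show ?thesis by linarith
qed

lemma corner_indices_in_idx:
  assumes "\<forall>d. 4 \<le> real (M d)"
  shows "(\<lambda>_. 1) \<in> idx M" "M \<in> idx M" "(\<lambda>_. 1) \<noteq> M"
proof -
  have M: "4 \<le> M d" for d
    using assms by simp
  then have "1 \<le> M d" for d
    using le_trans[of 1 4 "M d"] by simp
  then show "(\<lambda>_. 1) \<in> idx M" "M \<in> idx M"
    unfolding idx_def by (auto simp: PiE_iff)
  show "(\<lambda>_. 1) \<noteq> M"
    using M[of undefined] by (auto simp: fun_eq_iff intro!: exI[of _ undefined])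
qed

text \<open>The corner cells (1,...,1) and M are at distance at least 1/2 in every coordinate.\<close>
lemma banded_vanishes_at_corner_cells:
  assumes b: "banded \<delta> b" and \<delta>: "\<forall>d. \<delta> d \<le> 1/2"
    and M: "\<forall>d. 4 \<le> real (M d)" and s: "s \<in> grids M"
  shows "b (s (\<lambda>_. 1)) (s M) = 0"
proof -
  let ?x = "s (\<lambda>_. 1)" and ?y = "s M"
  have "\<delta> d \<le> \<bar>?x$d - ?y$d\<bar>" for d
  proof -
    have "?x \<in> cell M (\<lambda>_. 1)" "?y \<in> cell M M"
      using s corner_indices_in_idx[OF M] unfolding grids_def by auto
    then have "?x$d < 1 / real (M d)" "(real (M d) - 1) / real (M d) \<le> ?y$d"
      unfolding cell_def by auto
    moreover have "(real (M d) - 1) / real (M d) = 1 - 1 / real (M d)"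
      using M[rule_format, of d] by (simp add: diff_divide_distrib)
    moreover have "1 / real (M d) \<le> 1/4"
      using M[rule_format, of d] by (intro divide_left_mono) auto
    ultimately have "\<delta> d \<le> ?y$d - ?x$d"
      using \<delta>[rule_format, of d] by linarith
    then show ?thesis by linarith
  qed
  then show ?thesis
    using b s corner_indices_in_idx[OF M] grid_point_in_unit_cube unfolding banded_def by blast
qed

theorem theorem4:
  fixes g1 g2 b1 b2 :: "real^'d \<Rightarrow> real^'d \<Rightarrow> real"
    and K1 K2 :: nat
    and \<delta>1 \<delta>2 :: "'d \<Rightarrow> real"
    and M :: "'d \<Rightarrow> nat"
  assumes G1: "finite_rank_analytic_cov g1 K1"
    and G2: "finite_rank_analytic_cov g2 K2"
    and K12: "K2 \<le> K1"
    and B1: "cov_kernel b1" "continuous_kernel b1" "banded \<delta>1 b1"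
    and B2: "cov_kernel b2" "continuous_kernel b2" "banded \<delta>2 b2"
    and \<delta>1_range: "\<forall>d. 0 < \<delta>1 d \<and> \<delta>1 d < 1/2"
    and \<delta>2_range: "\<forall>d. 0 < \<delta>2 d \<and> \<delta>2 d < 1/2"
    and Kbound: "K1 \<le> Kstar M \<delta>1 \<delta>2"
  shows "AE s in grid_measure M. s \<in> grids M \<longrightarrow>
           ((\<lambda>x. kernel_tensor M g1 s x + kernel_tensor M b1 s x)
              = (\<lambda>x. kernel_tensor M g2 s x + kernel_tensor M b2 s x)
            \<longleftrightarrow> kernel_tensor M g1 s = kernel_tensor M g2 s
                \<and> kernel_tensor M b1 s = kernel_tensor M b2 s)"
proof (cases "\<forall>x\<in>unit_cube. \<forall>y\<in>unit_cube. g1 x y = g2 x y")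
  case True
  then show ?thesis
    by (intro AE_I2 impI kernel_tensor_sum_eq_iff_of_eq)
next
  case False
  then obtain x0 y0 where nonzero: "x0 \<in> unit_cube" "y0 \<in> unit_cube" "g1 x0 y0 - g2 x0 y0 \<noteq> 0"
    by auto
  have "K1 \<noteq> 0"
  proof
    assume "K1 = 0"
    with K12 G1 G2 nonzero show False
      unfolding finite_rank_analytic_cov_def by auto
  qed
  then have M: "\<forall>d. 4 \<le> real (M d)"
    using four_le_if_Kstar_nonzero[of \<delta>1 M \<delta>2] \<delta>1_range Kbound by (auto simp: less_imp_le)
  note corners = corner_indices_in_idx[OF M]
  have "continuous_on (unit_cube \<times> unit_cube) (\<lambda>(x, y). g1 x y - g2 x y)"
    using continuous_on_diff[OF finite_rank_analytic_cov_continuous[OF G1]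
        finite_rank_analytic_cov_continuous[OF G2]] by (simp add: case_prod_beta')
  then have nonzero_entry: "AE s in grid_measure M.
      s \<in> grids M \<longrightarrow> g1 (s (\<lambda>_. 1)) (s M) - g2 (s (\<lambda>_. 1)) (s M) \<noteq> 0"
    using AE_grid_entry_nonzero[OF _ separately_analytic_finite_rank_diff[OF G1 G2] nonzero corners]
    by simp
  have "\<forall>d. \<delta>1 d \<le> 1/2" "\<forall>d. \<delta>2 d \<le> 1/2"
    using \<delta>1_range \<delta>2_range by (auto intro: less_imp_le)
  note bands = banded_vanishes_at_corner_cells[OF B1(3) this(1) M]
    banded_vanishes_at_corner_cells[OF B2(3) this(2) M]
  show ?thesis
    using nonzero_entry
    by (rule AE_mp) (intro AE_I2 impI kernel_tensor_sum_eq_iff_of_entry[OF corners(1,2)] bands; simp)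
qed

end
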